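(* Let $\theta_1,\dots,\theta_{10}$ be real numbers such that $0<\theta_i<\theta_j<\theta_k<180$ for each of the triples $(i,j,k)\in\{(2,4,6),(1,5,9),(1,5,10),(1,5,7),(1,3,7),(1,4,7),(3,5,8),(2,8,9),(6,7,10)\}$, and write $s_{ij}=\sin(\theta_j-\theta_i)$. Then the $8\times 7$ matrix $$S_8=\begin{pmatrix} 0&-s_{58}&0&0&-s_{35}&0&0\\ -s_{89}&0&0&0&s_{29}&-s_{28}&0\\ s_{46}&0&-s_{26}&s_{24}&0&0&0\\ 0&0&0&-s_{7,10}&0&0&-s_{67}\\ 0&s_{17}&0&0&0&0&0\\ 0&0&s_{17}&0&0&0&0\\ 0&0&0&0&0&s_{15}&0\\ 0&0&0&0&0&0&s_{15} \end{pmatrix}$$ is a simplex.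
   Context: Angles are in degrees. A real matrix with $r+1$ rows and $r$ columns is called a simplex if, up to multiplication by a constant, there is precisely one positive linear dependency between its rows, i.e. there is a linear dependency among the rows with all coefficients strictly positive, and every linear dependency among the rows is a scalar multiple of it. (The columns of $S_8$ correspond to the unknowns $r_2,r_3,r_4,r_6,r_8,r_9,r_{10}$ in the triangle inequalities of a ten-line arrangement.) *)

theory Defs
  imports Complex_Main
begin

text \<open>A real matrix with m rows and n columns is modelled as a function
  M :: nat => nat => real, entry (i,j) for i < m, j < n (0-based).\<close>

definition row_dependency :: "nat \<Rightarrow> nat \<Rightarrow> (nat \<Rightarrow> nat \<Rightarrow> real) \<Rightarrow> (nat \<Rightarrow> real) \<Rightarrow> bool" where
  "row_dependency m n M c \<longleftrightarrow> (\<forall>j<n. (\<Sum>i<m. c i * M i j) = 0)"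

definition is_simplex :: "nat \<Rightarrow> (nat \<Rightarrow> nat \<Rightarrow> real) \<Rightarrow> bool" where
  "is_simplex r M \<longleftrightarrow>
     (\<exists>c. (\<forall>i<r+1. c i > 0) \<and> row_dependency (r+1) r M c \<and>
          (\<forall>d. row_dependency (r+1) r M d \<longrightarrow> (\<exists>t. \<forall>i<r+1. d i = t * c i)))"

definition sdeg :: "(nat \<Rightarrow> real) \<Rightarrow> nat \<Rightarrow> nat \<Rightarrow> real" where
  "sdeg \<theta> i j = sin ((\<theta> j - \<theta> i) * pi / 180)"

definition S8 :: "(nat \<Rightarrow> real) \<Rightarrow> nat \<Rightarrow> nat \<Rightarrow> real" where
  "S8 \<theta> i j = (let s = sdeg \<theta> in
     [[0, - s 5 8, 0, 0, - s 3 5, 0, 0],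
      [- s 8 9, 0, 0, 0, s 2 9, - s 2 8, 0],
      [s 4 6, 0, - s 2 6, s 2 4, 0, 0, 0],
      [0, 0, 0, - s 7 10, 0, 0, - s 6 7],
      [0, s 1 7, 0, 0, 0, 0, 0],
      [0, 0, s 1 7, 0, 0, 0, 0],
      [0, 0, 0, 0, 0, s 1 5, 0],
      [0, 0, 0, 0, 0, 0, s 1 5]] ! i ! j)"

end

theory Submission
  imports Defs
begin

text \<open>Each column of S8 has exactly two nonzero entries, of opposite signs, and they lie in
  rows linked by an edge of a tree on the eight rows. Hence a row dependency is a family of
  proportionality relations along the tree: fixing the coefficient at the root fixes all the
  others. The hypotheses on the angles put every difference occurring in S8 strictly between
  0 and 180 degrees, so all these sines are positive, and the root value 1 yields a positive
  dependency.\<close>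

lemma proportional_along_tree:
  fixes parent :: "'i \<Rightarrow> 'i" and a b c d :: "'i \<Rightarrow> 'a::field"
  assumes reach: "\<And>i. i \<in> I \<Longrightarrow> \<exists>n. (parent ^^ n) i = k"
    and parent_in: "\<And>i. i \<in> I \<Longrightarrow> i \<noteq> k \<Longrightarrow> parent i \<in> I"
    and a_nonzero: "\<And>i. i \<in> I \<Longrightarrow> i \<noteq> k \<Longrightarrow> a i \<noteq> 0"
    and c_rel: "\<And>i. i \<in> I \<Longrightarrow> i \<noteq> k \<Longrightarrow> c i * a i = c (parent i) * b i"
    and d_rel: "\<And>i. i \<in> I \<Longrightarrow> i \<noteq> k \<Longrightarrow> d i * a i = d (parent i) * b i"
    and c_root: "c k = 1"
    and "i \<in> I"
  shows "d i = d k * c i"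
proof -
  obtain n where "(parent ^^ n) i = k" using reach \<open>i \<in> I\<close> by blast
  then show ?thesis using \<open>i \<in> I\<close>
  proof (induction n arbitrary: i)
    case 0
    then show ?case using c_root by simp
  next
    case (Suc n)
    show ?case
    proof (cases "i = k")
      case True
      then show ?thesis using c_root by simp
    next
      case False
      have "(parent ^^ n) (parent i) = k"
        using Suc.prems(1) by (simp add: funpow_Suc_right del: funpow.simps)
      then have "d (parent i) = d k * c (parent i)"
        using Suc.IH parent_in Suc.prems(2) False by blast
      then have "d i * a i = d k * c i * a i"
        using c_rel d_rel Suc.prems(2) False by simp
      then show ?thesis using a_nonzero Suc.prems(2) False by simp
    qed
  qed
qed

lemma is_simplex_if_tree_relations:
  fixes M :: "nat \<Rightarrow> nat \<Rightarrow> real" and parent :: "nat \<Rightarrow> nat" and a b c :: "nat \<Rightarrow> real"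
  assumes dependency_iff: "\<And>d. row_dependency (r+1) r M d \<longleftrightarrow>
      (\<forall>i<r+1. i \<noteq> k \<longrightarrow> d i * a i = d (parent i) * b i)"
    and reach: "\<And>i. i < r+1 \<Longrightarrow> \<exists>n. (parent ^^ n) i = k"
    and parent_less: "\<And>i. i < r+1 \<Longrightarrow> i \<noteq> k \<Longrightarrow> parent i < r+1"
    and a_nonzero: "\<And>i. i < r+1 \<Longrightarrow> i \<noteq> k \<Longrightarrow> a i \<noteq> 0"
    and c_pos: "\<And>i. i < r+1 \<Longrightarrow> 0 < c i"
    and c_rel: "\<And>i. i < r+1 \<Longrightarrow> i \<noteq> k \<Longrightarrow> c i * a i = c (parent i) * b i"
    and c_root: "c k = 1"
  shows "is_simplex r M"
proof -
  have c_dep: "row_dependency (r+1) r M c"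
    unfolding dependency_iff using c_rel by blast
  have "\<exists>t. \<forall>i<r+1. d i = t * c i" if "row_dependency (r+1) r M d" for d
  proof -
    have d_rel: "\<And>i. i < r+1 \<Longrightarrow> i \<noteq> k \<Longrightarrow> d i * a i = d (parent i) * b i"
      using that unfolding dependency_iff by blast
    have "d i = d k * c i" if "i < r+1" for i
      by (rule proportional_along_tree[where I = "{..<r+1}" and parent = parent and a = a and b = b])
        (use reach parent_less a_nonzero c_rel d_rel c_root that in auto)
    then show ?thesis by blast
  qed
  then show ?thesis
    unfolding is_simplex_def using c_pos c_dep by blast
qed

lemma sdeg_pos: "\<theta> i < \<theta> j \<Longrightarrow> \<theta> j - \<theta> i < 180 \<Longrightarrow> 0 < sdeg \<theta> i j"
  unfolding sdeg_def
  by (rule sin_gt_zero)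
    (use pi_gt_zero mult_strict_left_mono[of "\<theta> j - \<theta> i" 180 pi] in \<open>auto simp: field_simps\<close>)

text \<open>For every row i \<noteq> 2 exactly one column of S8 has its two nonzero entries in rows i and
  S8_parent i; their absolute values are S8_own_coeff and S8_parent_coeff. Row 2 is the root, and
  the list entries at index 2 are dummies.\<close>

definition S8_parent :: "nat \<Rightarrow> nat" where
  "S8_parent i = [1, 2, 2, 2, 0, 2, 1, 3] ! i"

definition S8_own_coeff :: "(nat \<Rightarrow> real) \<Rightarrow> nat \<Rightarrow> real" where
  "S8_own_coeff \<theta> i = (let s = sdeg \<theta> in [s 3 5, s 8 9, 1, s 7 10, s 1 7, s 1 7, s 1 5, s 1 5] ! i)"

definition S8_parent_coeff :: "(nat \<Rightarrow> real) \<Rightarrow> nat \<Rightarrow> real" where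
  "S8_parent_coeff \<theta> i = (let s = sdeg \<theta> in [s 2 9, s 4 6, 1, s 2 4, s 5 8, s 2 6, s 2 8, s 6 7] ! i)"

lemma row_dependency_S8_iff:
  "row_dependency 8 7 (S8 \<theta>) d \<longleftrightarrow>
     (\<forall>i<8. i \<noteq> 2 \<longrightarrow> d i * S8_own_coeff \<theta> i = d (S8_parent i) * S8_parent_coeff \<theta> i)"
  unfolding row_dependency_def S8_def S8_parent_def S8_own_coeff_def S8_parent_coeff_def Let_def
  by (simp add: numeral_eq_Suc lessThan_Suc All_less_Suc) (auto simp: algebra_simps)

lemma S8_parent_reaches_root: "i < 8 \<Longrightarrow> \<exists>n. (S8_parent ^^ n) i = 2"
  by (auto simp: less_Suc_eq numeral_eq_Suc S8_parent_def
      intro: exI[of _ 0] exI[of _ 1] exI[of _ 2] exI[of _ 3])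

lemma S8_parent_less: "i < 8 \<Longrightarrow> S8_parent i < 8"
  by (auto simp: S8_parent_def less_Suc_eq numeral_eq_Suc)

text \<open>Products of the ratios \<rho> along the path from each row to the root; with
  \<rho> i = S8_parent_coeff / S8_own_coeff this is the dependency normalised to 1 at the root.\<close>

definition S8_path_product :: "(nat \<Rightarrow> real) \<Rightarrow> nat \<Rightarrow> real" where
  "S8_path_product \<rho> i =
     [\<rho> 0 * \<rho> 1, \<rho> 1, 1, \<rho> 3, \<rho> 4 * \<rho> 0 * \<rho> 1, \<rho> 5, \<rho> 6 * \<rho> 1, \<rho> 7 * \<rho> 3] ! i"

lemma S8_path_product_pos:
  assumes "\<And>j. j < 8 \<Longrightarrow> 0 < \<rho> j" and "i < 8"
  shows "0 < S8_path_product \<rho> i"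
proof -
  have "0 < \<rho> 0" "0 < \<rho> 1" "0 < \<rho> 3" "0 < \<rho> 4" "0 < \<rho> 5" "0 < \<rho> 6" "0 < \<rho> 7"
    using assms(1) by simp_all
  then show ?thesis
    using assms(2) by (auto simp: S8_path_product_def less_Suc_eq numeral_eq_Suc)
qed

lemma S8_path_product_root: "S8_path_product \<rho> 2 = 1"
  by (simp add: S8_path_product_def)

lemma S8_path_product_step:
  "i < 8 \<Longrightarrow> i \<noteq> 2 \<Longrightarrow> S8_path_product \<rho> i = S8_path_product \<rho> (S8_parent i) * \<rho> i"
  by (auto simp: S8_path_product_def S8_parent_def less_Suc_eq numeral_eq_Suc)

theorem lemmal:
  fixes \<theta> :: "nat \<Rightarrow> real"
  assumes "\<forall>(i,j,k) \<in> set [(2,4,6),(1,5,9),(1,5,10),(1,5,7),(1,3,7),(1,4,7),(3,5,8),(2,8,9),(6,7,10)].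
             0 < \<theta> i \<and> \<theta> i < \<theta> j \<and> \<theta> j < \<theta> k \<and> \<theta> k < 180"
  shows "is_simplex 7 (S8 \<theta>)"
proof -
  let ?\<rho> = "\<lambda>i. S8_parent_coeff \<theta> i / S8_own_coeff \<theta> i"
  have own_pos: "0 < S8_own_coeff \<theta> i" and parent_pos: "0 < S8_parent_coeff \<theta> i"
    if "i < 8" for i
    using that assms
    by (auto simp: S8_own_coeff_def S8_parent_coeff_def less_Suc_eq numeral_eq_Suc intro!: sdeg_pos)
  then have ratio_pos: "0 < ?\<rho> i" if "i < 8" for i
    using that by simp
  have own_nonzero: "S8_own_coeff \<theta> i \<noteq> 0" if "i < 8" for i
    using own_pos[OF that] by simp
  have path_pos: "0 < S8_path_product ?\<rho> i" if "i < 8" for i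
    by (rule S8_path_product_pos[OF ratio_pos that])
  have relation: "S8_path_product ?\<rho> i * S8_own_coeff \<theta> i
      = S8_path_product ?\<rho> (S8_parent i) * S8_parent_coeff \<theta> i" if "i < 8" "i \<noteq> 2" for i
    using S8_path_product_step[OF that] own_nonzero[OF \<open>i < 8\<close>] by simp
  show ?thesis
    by (rule is_simplex_if_tree_relations[where k = 2 and parent = S8_parent
          and a = "S8_own_coeff \<theta>" and b = "S8_parent_coeff \<theta>" and c = "S8_path_product ?\<rho>"])
      (simp_all add: row_dependency_S8_iff S8_parent_reaches_root S8_parent_less own_nonzero
        path_pos relation S8_path_product_root)
qed

end
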